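(* Let $\delta>0$ and $\beta:[0,+\infty)\to(0,+\infty)$ continuously differentiable, strictly decreasing, with $\lim_{S\to+\infty}\beta(S)=0$, and $\delta<\beta(0)$. Let $\chi:[0,+\infty)\to(-\infty,0]$, $\chi(y)=y\beta'(y)$, and assume (H$_1$) $\chi$ is decreasing on $[0,\beta^{-1}(\delta)]$; (H$_2$) $\chi(\beta^{-1}(\delta))<-4\delta$. Then there exists a unique $\tau^*\in(0,\bar\tau)$ such that, for $\tau\in[0,\bar\tau)$, the inequality $$\frac{4\delta e^{-\delta\tau}}{2e^{-\delta\tau}-1}+(2e^{-\delta\tau}-1)\,\chi\!\left(\beta^{-1}\!\Big(\frac{\delta}{2e^{-\delta\tau}-1}\Big)\right)<0$$ holds if and only if $\tau\in[0,\tau^* )$.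
   Context: $\bar\tau:=\frac1\delta\ln\!\big(\frac{2\beta(0)}{\delta+\beta(0)}\big)$; $\beta^{-1}:(0,\beta(0)]\to[0,\infty)$ is the inverse function of $\beta$. For $\tau\in[0,\bar\tau)$ one has $2e^{-\delta\tau}-1>0$ and $\delta\le \frac{\delta}{2e^{-\delta\tau}-1}<\beta(0)$. *)

theory Defs
  imports Complex_Main
begin

definition beta_inv :: "(real \<Rightarrow> real) \<Rightarrow> real \<Rightarrow> real" where
  "beta_inv \<beta> x = inv_into {0..} \<beta> x"

definition tau_bar :: "real \<Rightarrow> (real \<Rightarrow> real) \<Rightarrow> real" where
  "tau_bar \<delta> \<beta> = (1 / \<delta>) * ln (2 * \<beta> 0 / (\<delta> + \<beta> 0))"

end

theory Submission
  imports Defs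
begin

(* Put u = 2 exp(-\<delta> \<tau>) - 1; as \<tau> runs through [0, tau_bar) the value
   u decreases through (\<delta>/\<beta>(0), 1].  Set y = beta_inv(\<delta>/u), so that \<beta>(y) = \<delta>/u and
   y increases through [0, y_\<delta>] with y_\<delta> = beta_inv(\<delta>).  Since exp(-\<delta> \<tau>) = (u+1)/2,
   the expression of the theorem equals u * G(y) with
       G(y) = 2 \<beta>(y) + 2 \<beta>(y)^2 / \<delta> + \<chi>(y).
   By (H1) G is strictly decreasing on [0, y_\<delta>]; G(0) > 0 because \<chi>(0) = 0, and
   G(y_\<delta>) < 0 is (H2).  Hence G changes sign exactly once, at some y_s, and the
   expression is negative iff y > y_s, i.e. iff \<tau> < \<tau>_s, where \<tau>_s is the time at
   which u = \<delta>/\<beta>(y_s). *)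

text \<open>By the intermediate value theorem a continuous function on [0,\<infinity>) tending
  to 0 attains every value in (0, \<beta> 0]; hence beta_inv is a right inverse of \<beta>
  there, with values in [0,\<infinity>).\<close>
lemma beta_inv_right_inverse:
  fixes \<beta> :: "real \<Rightarrow> real"
  assumes cont: "continuous_on {0..} \<beta>"
    and lim: "(\<beta> \<longlongrightarrow> 0) at_top"
    and v: "0 < v" "v \<le> \<beta> 0"
  shows "\<beta> (beta_inv \<beta> v) = v" and "beta_inv \<beta> v \<ge> 0"
proof -
  have "eventually (\<lambda>x. \<beta> x < v) at_top"
    using lim v(1) by (rule order_tendstoD)
  then obtain N where N: "\<And>x. x \<ge> N \<Longrightarrow> \<beta> x < v"
    by (auto simp: eventually_at_top_linorder)
  define b where "b = max N 0"
  have "\<beta> b \<le> v" "0 \<le> b"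
    using N[of b] by (simp_all add: b_def)
  moreover have "continuous_on {0..b} \<beta>"
    using cont by (rule continuous_on_subset) auto
  ultimately obtain x where "0 \<le> x" "\<beta> x = v"
    using IVT2'[of \<beta> b v 0] v by auto
  then have "v \<in> \<beta> ` {0..}" by auto
  then show "\<beta> (beta_inv \<beta> v) = v" and "beta_inv \<beta> v \<ge> 0"
    using inv_into_into[of v \<beta> "{0..}"] f_inv_into_f[of v \<beta> "{0..}"]
    unfolding beta_inv_def by auto
qed

lemma decreasing_sign_change:
  fixes g :: "real \<Rightarrow> real"
  assumes "a \<le> b" and cont: "continuous_on {a..b} g"
    and dec: "\<And>x y. a \<le> x \<Longrightarrow> x < y \<Longrightarrow> y \<le> b \<Longrightarrow> g y < g x"
    and ga: "g a > 0" and gb: "g b < 0"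
  shows "\<exists>c. a < c \<and> c < b \<and> (\<forall>y. a \<le> y \<and> y \<le> b \<longrightarrow> (g y < 0 \<longleftrightarrow> c < y))"
proof -
  obtain c where c: "a \<le> c" "c \<le> b" "g c = 0"
    using IVT2'[of g b 0 a] \<open>a \<le> b\<close> cont ga gb by auto
  have "a < c" "c < b"
    using c ga gb by (auto simp: order_le_less)
  moreover have "g y < 0 \<longleftrightarrow> c < y" if "a \<le> y" "y \<le> b" for y
    using dec[of c y] dec[of y c] c that by (cases y c rule: linorder_cases) auto
  ultimately show ?thesis by blast
qed

lemma two_exp_minus_one_gt_iff:
  fixes \<delta> w \<tau> :: real
  assumes "\<delta> > 0" and "w > -1"
  shows "w < 2 * exp (- \<delta> * \<tau>) - 1 \<longleftrightarrow> \<tau> < - ln ((w + 1) / 2) / \<delta>"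
proof -
  have level_pos: "0 < (w + 1) / 2"
    using assms(2) by simp
  have "w < 2 * exp (- \<delta> * \<tau>) - 1 \<longleftrightarrow> (w + 1) / 2 < exp (- \<delta> * \<tau>)"
    by (simp add: field_simps)
  also have "\<dots> \<longleftrightarrow> ln ((w + 1) / 2) < - \<delta> * \<tau>"
    by (metis exp_less_cancel_iff exp_ln[OF level_pos])
  also have "\<dots> \<longleftrightarrow> \<tau> < - ln ((w + 1) / 2) / \<delta>"
    using pos_less_divide_eq[of \<delta> \<tau> "- ln ((w + 1) / 2)"] assms(1) by (auto simp: mult.commute)
  finally show ?thesis .
qed

text \<open>tau_bar is the time at which 2 exp(-\<delta> \<tau>) - 1 reaches the level \<delta>/\<beta>(0).\<close>
lemma tau_bar_level_time:
  assumes "\<delta> > 0" and "\<beta> 0 > 0"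
  shows "tau_bar \<delta> \<beta> = - ln ((\<delta> / \<beta> 0 + 1) / 2) / \<delta>"
proof -
  have "(\<delta> / \<beta> 0 + 1) / 2 = inverse (2 * \<beta> 0 / (\<delta> + \<beta> 0))"
    using assms by (simp add: field_simps)
  then have "ln ((\<delta> / \<beta> 0 + 1) / 2) = - ln (2 * \<beta> 0 / (\<delta> + \<beta> 0))"
    by (simp only: ln_inverse)
  then show ?thesis
    by (simp add: tau_bar_def)
qed

lemma threshold_unique:
  fixes a b T :: real
  assumes "0 < a" "a < T" "0 < b" "b < T"
    and "\<forall>\<tau>. 0 \<le> \<tau> \<and> \<tau> < T \<longrightarrow> (P \<tau> \<longleftrightarrow> \<tau> < a)"
    and "\<forall>\<tau>. 0 \<le> \<tau> \<and> \<tau> < T \<longrightarrow> (P \<tau> \<longleftrightarrow> \<tau> < b)"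
  shows "a = b"
  using assms spec[OF assms(5), of "min a b"] spec[OF assms(6), of "min a b"]
  by (cases a b rule: linorder_cases) auto

text \<open>Only continuity of \<beta> and \<chi> and the value \<chi>(0) = 0 are needed from the
  differentiability assumptions of the theorem.\<close>
locale decreasing_beta_setting =
  fixes \<delta> :: real and \<beta> \<chi> :: "real \<Rightarrow> real"
  assumes delta_pos: "\<delta> > 0"
    and beta_pos: "\<And>y. y \<ge> 0 \<Longrightarrow> \<beta> y > 0"
    and beta_cont: "continuous_on {0..} \<beta>"
    and beta_strict_dec: "\<And>x y. 0 \<le> x \<Longrightarrow> x < y \<Longrightarrow> \<beta> y < \<beta> x"
    and beta_lim: "(\<beta> \<longlongrightarrow> 0) at_top"
    and delta_lt: "\<delta> < \<beta> 0"
    and chi_cont: "continuous_on {0..} \<chi>"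
    and chi_zero: "\<chi> 0 = 0"
    and H1: "\<And>x y. 0 \<le> x \<Longrightarrow> x \<le> y \<Longrightarrow> y \<le> beta_inv \<beta> \<delta> \<Longrightarrow> \<chi> y \<le> \<chi> x"
    and H2: "\<chi> (beta_inv \<beta> \<delta>) < - 4 * \<delta>"
begin

definition crit :: "real \<Rightarrow> real" where
  "crit \<tau> = 4 * \<delta> * exp (- \<delta> * \<tau>) / (2 * exp (- \<delta> * \<tau>) - 1)
      + (2 * exp (- \<delta> * \<tau>) - 1) * \<chi> (beta_inv \<beta> (\<delta> / (2 * exp (- \<delta> * \<tau>) - 1)))"

text \<open>The expression rewritten in the variable y = beta_inv(\<delta>/u), up to the factor u.\<close>
definition G :: "real \<Rightarrow> real" where
  "G y = 2 * \<beta> y + 2 * (\<beta> y)\<^sup>2 / \<delta> + \<chi> y"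

definition y_delta :: real where
  "y_delta = beta_inv \<beta> \<delta>"

lemma beta_less_iff: "0 \<le> x \<Longrightarrow> 0 \<le> y \<Longrightarrow> \<beta> y < \<beta> x \<longleftrightarrow> x < y"
  using beta_strict_dec by (metis less_asym linorder_neqE_linordered_idom)

lemma beta_inv_props:
  assumes "0 < v" "v \<le> \<beta> 0"
  shows "\<beta> (beta_inv \<beta> v) = v" and "beta_inv \<beta> v \<ge> 0"
  using beta_inv_right_inverse[OF beta_cont beta_lim assms] by auto

text \<open>y_delta is positive because \<delta> < \<beta> 0.\<close>
lemma y_delta_props: "\<beta> y_delta = \<delta>" "y_delta > 0"
  using beta_inv_props[of \<delta>] delta_pos delta_lt
  by (auto simp: y_delta_def order_le_less)

text \<open>(H1) and the strict decrease of \<beta> make G strictly decreasing on [0, y_delta].\<close>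
lemma G_strict_dec:
  assumes "0 \<le> x" "x < y" "y \<le> y_delta"
  shows "G y < G x"
proof -
  have beta_xy: "\<beta> y < \<beta> x" "0 < \<beta> y"
    using assms beta_strict_dec beta_pos by auto
  then have "2 * (\<beta> y)\<^sup>2 / \<delta> < 2 * (\<beta> x)\<^sup>2 / \<delta>"
    using delta_pos by (simp add: power_strict_mono divide_strict_right_mono)
  moreover have "\<chi> y \<le> \<chi> x"
    using H1 assms by (simp add: y_delta_def)
  ultimately show ?thesis
    using beta_xy by (simp add: G_def)
qed

text \<open>G is positive at 0 (as \<chi>(0) = 0) and negative at y_delta by (H2), so it has a
  single sign change ys inside (0, y_delta).\<close>
lemma G_sign_change:
  "\<exists>ys. 0 < ys \<and> ys < y_delta \<and> (\<forall>y. 0 \<le> y \<and> y \<le> y_delta \<longrightarrow> (G y < 0 \<longleftrightarrow> ys < y))"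
proof -
  have cont: "continuous_on {0..y_delta} G"
    using continuous_on_subset[OF beta_cont] continuous_on_subset[OF chi_cont] delta_pos
    unfolding G_def by (intro continuous_intros) auto
  have "0 \<le> 2 * (\<beta> 0)\<^sup>2 / \<delta>"
    using delta_pos by simp
  then have G0: "G 0 > 0"
    using beta_pos[of 0] by (simp add: G_def chi_zero)
  have Gyd: "G y_delta < 0"
    using H2 y_delta_props delta_pos by (simp add: G_def y_delta_def power2_eq_square)
  show ?thesis
    using decreasing_sign_change[OF _ cont G_strict_dec G0 Gyd] y_delta_props(2) by simp
qed

lemma crit_factorisation:
  assumes "u = 2 * exp (- \<delta> * \<tau>) - 1" "u > 0" "\<beta> (beta_inv \<beta> (\<delta> / u)) = \<delta> / u"
  shows "crit \<tau> = u * G (beta_inv \<beta> (\<delta> / u))"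
proof -
  define y where "y = beta_inv \<beta> (\<delta> / u)"
  have "exp (- \<delta> * \<tau>) = (u + 1) / 2"
    using assms(1) by simp
  then have "crit \<tau> = 4 * \<delta> * ((u + 1) / 2) / u + u * \<chi> y"
    unfolding crit_def assms(1)[symmetric] y_def by simp
  also have "\<dots> = u * G y"
    unfolding G_def y_def assms(3) using assms(2) delta_pos by (simp add: field_simps power2_eq_square)
  finally show ?thesis
    by (simp add: y_def)
qed

lemma crit_negative_iff:
  assumes ys: "0 < ys" "ys < y_delta" "\<forall>y. 0 \<le> y \<and> y \<le> y_delta \<longrightarrow> (G y < 0 \<longleftrightarrow> ys < y)"
    and tau: "0 \<le> \<tau>" "\<tau> < tau_bar \<delta> \<beta>"
  shows "crit \<tau> < 0 \<longleftrightarrow> \<tau> < - ln ((\<delta> / \<beta> ys + 1) / 2) / \<delta>"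
proof -
  define u where "u = 2 * exp (- \<delta> * \<tau>) - 1"
  define y where "y = beta_inv \<beta> (\<delta> / u)"
  have beta0: "\<beta> 0 > 0" "\<beta> ys > 0"
    using beta_pos ys by auto
  have ratios_pos: "0 < \<delta> / \<beta> 0" "0 < \<delta> / \<beta> ys"
    using delta_pos beta0 by simp_all
  then have u_low: "\<delta> / \<beta> 0 < u"
    using two_exp_minus_one_gt_iff[of \<delta> "\<delta> / \<beta> 0" \<tau>] tau delta_pos
    by (simp add: u_def tau_bar_level_time[of \<delta> \<beta>, OF delta_pos beta0(1)])
  have u_pos: "u > 0"
    using u_low ratios_pos by linarith
  have "u \<le> 1"
    using tau delta_pos by (simp add: u_def)
  then have v_bounds: "\<delta> \<le> \<delta> / u" "\<delta> / u \<le> \<beta> 0"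
    using u_pos u_low delta_pos beta0 by (simp_all add: field_simps)
  have y: "\<beta> y = \<delta> / u" "0 \<le> y"
    using beta_inv_props[of "\<delta> / u"] u_pos delta_pos v_bounds by (auto simp: y_def)
  have "\<not> y_delta < y"
    using beta_less_iff[of y_delta y] y y_delta_props v_bounds by auto
  then have "y \<le> y_delta" by simp
  have "crit \<tau> < 0 \<longleftrightarrow> G y < 0"
    using crit_factorisation[OF u_def u_pos] y u_pos by (simp add: y_def mult_less_0_iff)
  also have "\<dots> \<longleftrightarrow> ys < y"
    using ys(3) y \<open>y \<le> y_delta\<close> by blast
  also have "\<dots> \<longleftrightarrow> \<delta> / u < \<beta> ys"
    using beta_less_iff[of ys y] y ys by simp
  also have "\<dots> \<longleftrightarrow> \<delta> / \<beta> ys < u"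
    using u_pos beta0 delta_pos by (simp add: field_simps)
  also have "\<dots> \<longleftrightarrow> \<tau> < - ln ((\<delta> / \<beta> ys + 1) / 2) / \<delta>"
    unfolding u_def using two_exp_minus_one_gt_iff[of \<delta> "\<delta> / \<beta> ys" \<tau>] delta_pos ratios_pos
    by simp
  finally show ?thesis .
qed

text \<open>The threshold time lies in (0, tau_bar) because \<delta> < \<beta>(ys) < \<beta>(0).\<close>
lemma threshold_exists:
  "\<exists>\<tau>s. 0 < \<tau>s \<and> \<tau>s < tau_bar \<delta> \<beta> \<and>
     (\<forall>\<tau>. 0 \<le> \<tau> \<and> \<tau> < tau_bar \<delta> \<beta> \<longrightarrow> (crit \<tau> < 0 \<longleftrightarrow> \<tau> < \<tau>s))"
proof -
  obtain ys where ys: "0 < ys" "ys < y_delta"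
    "\<forall>y. 0 \<le> y \<and> y \<le> y_delta \<longrightarrow> (G y < 0 \<longleftrightarrow> ys < y)"
    using G_sign_change by blast
  define \<tau>s where "\<tau>s = - ln ((\<delta> / \<beta> ys + 1) / 2) / \<delta>"
  have beta_ys: "\<delta> < \<beta> ys" "\<beta> ys < \<beta> 0"
    using beta_strict_dec[of ys y_delta] beta_strict_dec[of 0 ys] ys y_delta_props by auto
  have "0 < \<beta> 0"
    using beta_pos by simp
  then have levels: "0 < (\<delta> / \<beta> 0 + 1) / 2" "(\<delta> / \<beta> 0 + 1) / 2 < (\<delta> / \<beta> ys + 1) / 2"
    "(\<delta> / \<beta> ys + 1) / 2 < 1"
    using beta_ys delta_pos by (simp_all add: divide_strict_left_mono add_pos_pos)
  then have "ln ((\<delta> / \<beta> 0 + 1) / 2) < ln ((\<delta> / \<beta> ys + 1) / 2)" "ln ((\<delta> / \<beta> ys + 1) / 2) < 0"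
    by (metis ln_less_cancel_iff order.strict_trans, metis ln_less_zero order.strict_trans)
  then have "0 < \<tau>s" "\<tau>s < tau_bar \<delta> \<beta>"
    using delta_pos \<open>0 < \<beta> 0\<close>
    by (simp_all add: \<tau>s_def tau_bar_level_time divide_strict_right_mono divide_neg_pos)
  then show ?thesis
    using crit_negative_iff[OF ys] unfolding \<tau>s_def by blast
qed

end

theorem lemma5p2:
  fixes \<delta> :: real and \<beta> \<beta>' \<chi> :: "real \<Rightarrow> real"
  assumes delta_pos: "\<delta> > 0"
    and beta_pos: "\<forall>y\<ge>0. \<beta> y > 0"
    and beta_deriv: "\<forall>y\<ge>0. (\<beta> has_real_derivative \<beta>' y) (at y within {0..})"
    and beta'_cont: "continuous_on {0..} \<beta>'"
    and beta_strict_dec: "\<forall>x y. 0 \<le> x \<and> x < y \<longrightarrow> \<beta> y < \<beta> x"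
    and beta_lim: "(\<beta> \<longlongrightarrow> 0) at_top"
    and delta_lt: "\<delta> < \<beta> 0"
    and chi_def: "\<forall>y\<ge>0. \<chi> y = y * \<beta>' y"
    and H1: "\<forall>x y. 0 \<le> x \<and> x \<le> y \<and> y \<le> beta_inv \<beta> \<delta> \<longrightarrow> \<chi> y \<le> \<chi> x"
    and H2: "\<chi> (beta_inv \<beta> \<delta>) < - 4 * \<delta>"
  shows "\<exists>!\<tau>s. 0 < \<tau>s \<and> \<tau>s < tau_bar \<delta> \<beta> \<and>
           (\<forall>\<tau>. 0 \<le> \<tau> \<and> \<tau> < tau_bar \<delta> \<beta> \<longrightarrow>
              (4 * \<delta> * exp (- \<delta> * \<tau>) / (2 * exp (- \<delta> * \<tau>) - 1)
                 + (2 * exp (- \<delta> * \<tau>) - 1)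
                   * \<chi> (beta_inv \<beta> (\<delta> / (2 * exp (- \<delta> * \<tau>) - 1))) < 0
               \<longleftrightarrow> \<tau> < \<tau>s))"
proof -
  have beta_cont: "continuous_on {0..} \<beta>"
    by (rule DERIV_continuous_on) (use beta_deriv in auto)
  have "continuous_on {0..} (\<lambda>y. y * \<beta>' y)"
    by (intro continuous_intros beta'_cont)
  then have chi_cont: "continuous_on {0..} \<chi>"
    using chi_def by (auto intro: continuous_on_cong[THEN iffD1, rotated 2])
  interpret decreasing_beta_setting \<delta> \<beta> \<chi>
    using delta_pos beta_pos beta_cont beta_strict_dec beta_lim delta_lt chi_cont chi_def H1 H2
    by unfold_locales auto
  show ?thesis
    using threshold_exists threshold_unique[where P = "\<lambda>\<tau>. crit \<tau> < 0"]
    unfolding crit_def by (intro ex_ex1I) blast+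
qed

end
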